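(* For every $n\geq 1$, $\operatorname{diam}(\mathrm{CIM}_n)\leq 2n-2$.
   Context: For a directed acyclic graph (DAG) $\mathcal{G}$ on vertex set $[n]=\{1,\dots,n\}$, the characteristic imset $c_\mathcal{G}$ is the 0/1-vector indexed by the subsets $S\subseteq[n]$ with $|S|\geq 2$, with $c_\mathcal{G}(S)=1$ if there exists $i\in S$ such that $S\subseteq \mathrm{pa}_\mathcal{G}(i)\cup\{i\}$ (where $\mathrm{pa}_\mathcal{G}(i)$ is the set of parents of $i$), and $c_\mathcal{G}(S)=0$ otherwise. The characteristic imset polytope is $\mathrm{CIM}_n=\operatorname{conv}(c_\mathcal{G}\colon \mathcal{G}\text{ a DAG on }[n])$. For a polytope $P$, the vertex-edge graph $G(P)$ has the vertices of $P$ as nodes, with two vertices adjacent iff their convex hull is an edge of $P$; $\operatorname{diam}(P)$ is the maximum over pairs of vertices of the length of a shortest path between them in $G(P)$. *)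

theory Defs
  imports "HOL-Analysis.Analysis" "HOL-Library.Function_Algebras"
begin

text \<open>Real vector space structure on functions (pointwise), so that vectors
indexed by subsets of [n] can be represented as functions nat set => real.\<close>

instantiation "fun" :: (type, real_vector) real_vector
begin
definition scaleR_fun_def: "scaleR r f = (\<lambda>x. scaleR r (f x))"
instance
  by standard (auto simp: scaleR_fun_def fun_eq_iff scaleR_add_right scaleR_add_left)
end

text \<open>A DAG on [n] = {1..n}: an acyclic edge relation (j,i) meaning j -> i.\<close>
definition is_DAG :: "nat \<Rightarrow> (nat \<times> nat) set \<Rightarrow> bool" where
  "is_DAG n E \<longleftrightarrow> E \<subseteq> {1..n} \<times> {1..n} \<and> acyclic E"

definition pa :: "(nat \<times> nat) set \<Rightarrow> nat \<Rightarrow> nat set" where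
  "pa E i = {j. (j, i) \<in> E}"

text \<open>Characteristic imset, indexed by subsets S of [n] with |S| >= 2
  (coordinates outside this index set are 0).\<close>
definition char_imset :: "nat \<Rightarrow> (nat \<times> nat) set \<Rightarrow> nat set \<Rightarrow> real" where
  "char_imset n E = (\<lambda>S. if S \<subseteq> {1..n} \<and> 2 \<le> card S \<and> (\<exists>i\<in>S. S \<subseteq> pa E i \<union> {i}) then 1 else 0)"

definition CIM :: "nat \<Rightarrow> (nat set \<Rightarrow> real) set" where
  "CIM n = convex hull {char_imset n E | E. is_DAG n E}"

definition poly_vertices :: "'a::real_vector set \<Rightarrow> 'a set" where
  "poly_vertices P = {v. v extreme_point_of P}"

definition poly_adj :: "'a::real_vector set \<Rightarrow> 'a \<Rightarrow> 'a \<Rightarrow> bool" where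
  "poly_adj P u v \<longleftrightarrow> u \<in> poly_vertices P \<and> v \<in> poly_vertices P \<and> u \<noteq> v
      \<and> (convex hull {u, v}) face_of P"

definition is_walk :: "('a \<Rightarrow> 'a \<Rightarrow> bool) \<Rightarrow> 'a list \<Rightarrow> bool" where
  "is_walk adj p \<longleftrightarrow> p \<noteq> [] \<and> (\<forall>i < length p - 1. adj (p ! i) (p ! Suc i))"

definition graph_dist :: "('a \<Rightarrow> 'a \<Rightarrow> bool) \<Rightarrow> 'a \<Rightarrow> 'a \<Rightarrow> enat" where
  "graph_dist adj u v =
     (INF p \<in> {p. is_walk adj p \<and> hd p = u \<and> last p = v}. enat (length p - 1))"

definition poly_diam :: "'a::real_vector set \<Rightarrow> enat" where
  "poly_diam P = (SUP u \<in> poly_vertices P. SUP v \<in> poly_vertices P. graph_dist (poly_adj P) u v)"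

end

theory Submission imports Defs begin

text \<open>Let i be a node of a DAG G that has parents, all of which are sources, and let G' be G
  with the arrows into i removed. Then c_G and c_G' differ exactly on the sets S with
  i \<in> S \<subseteq> {i} \<union> pa(i), |S| \<ge> 2, and they span an edge of CIM_n: the vertices agreeing with
  c_G off these sets form a face, and on it the linear functional
  x \<mapsto> \<Sum>_S (x({i} \<union> pa(i)) - x(S)) is maximal exactly at c_G and c_G'. Repeating this step
  reaches the empty DAG after as many steps as G has nodes with parents, at most n - 1, so any
  two vertices are joined through c_\<emptyset> by a path of length at most 2n - 2.\<close>

lemma affine_linear_vimage:
  fixes f :: "'a::real_vector \<Rightarrow> real"
  assumes "linear f" "affine S"
  shows "affine (f -` S)"
  using assms unfolding affine_def by (simp add: linear_add linear_scale)

lemma face_of_convex_hull_maximizers: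
  fixes f :: "'a::real_vector \<Rightarrow> real"
  assumes "linear f" "finite X" "\<And>x. x \<in> X \<Longrightarrow> f x \<le> m"
  shows "convex hull {x\<in>X. f x = m} face_of convex hull X"
proof (rule face_of_convex_hulls)
  have "affine hull {x\<in>X. f x = m} \<subseteq> f -` {m}"
    by (rule hull_minimal) (auto intro: affine_linear_vimage[OF assms(1)])
  moreover have "convex hull (X - {x\<in>X. f x = m}) \<subseteq> f -` {..<m}"
    by (rule hull_minimal) (use assms in \<open>auto intro: convex_linear_vimage simp: less_le\<close>)
  ultimately show "affine hull {x\<in>X. f x = m} \<inter> convex hull (X - {x\<in>X. f x = m}) = {}"
    by auto
qed (use assms in auto)

lemma face_of_convex_hull_agreeing:
  fixes X :: "('a \<Rightarrow> real) set"
  assumes "finite X" "finite J" and c: "\<And>S. S \<in> J \<Longrightarrow> c S \<in> {0, 1}"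
    and X: "\<And>x S. x \<in> X \<Longrightarrow> S \<in> J \<Longrightarrow> 0 \<le> x S \<and> x S \<le> 1"
  shows "convex hull {x\<in>X. \<forall>S\<in>J. x S = c S} face_of convex hull X"
proof -
  define f where "f x = (\<Sum>S\<in>J. if c S = 1 then x S else - x S)" for x :: "'a \<Rightarrow> real"
  have "linear f"
    unfolding f_def by (intro linear_compose_sum ballI) (simp add: linearI scaleR_fun_def)
  have l1_distance: "sum c J - f x = (\<Sum>S\<in>J. \<bar>x S - c S\<bar>)" if "x \<in> X" for x
    unfolding f_def sum_subtractf[symmetric]
    by (intro sum.cong) (use c X[OF that] in fastforce)+
  have "f x \<le> sum c J" if "x \<in> X" for x
    using l1_distance[OF that] sum_abs_ge_zero[of "\<lambda>S. x S - c S" J] by linarith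
  moreover have "f x = sum c J \<longleftrightarrow> (\<forall>S\<in>J. x S = c S)" if "x \<in> X" for x
    using l1_distance[OF that] sum_nonneg_eq_0_iff[OF \<open>finite J\<close>, of "\<lambda>S. \<bar>x S - c S\<bar>"] by auto
  then have "{x\<in>X. \<forall>S\<in>J. x S = c S} = {x\<in>X. f x = sum c J}"
    by blast
  ultimately show ?thesis
    using face_of_convex_hull_maximizers[OF \<open>linear f\<close> \<open>finite X\<close>] by simp
qed

lemma relpowp_sym:
  assumes "\<And>x y. R x y \<Longrightarrow> R y x" and "(R ^^ k) u v"
  shows "(R ^^ k) v u"
  using assms(2)
proof (induction k arbitrary: u)
  case (Suc k)
  from Suc.prems obtain w where "R u w" "(R ^^ k) w v" by (rule relpowp_Suc_E2)
  then show ?case using Suc.IH assms(1) relpowp_Suc_I by metis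
qed simp

lemma graph_dist_le_relpowp:
  assumes "(adj ^^ k) u v"
  shows "graph_dist adj u v \<le> enat k"
proof -
  obtain f where f: "f 0 = u" "f k = v" "\<forall>i<k. adj (f i) (f (Suc i))"
    using assms by (auto simp: relpowp_fun_conv)
  define p where "p = map f [0..<Suc k]"
  have "is_walk adj p \<and> hd p = u \<and> last p = v"
    using f by (auto simp: p_def is_walk_def hd_map last_map last_upt simp del: upt_Suc)
  then show ?thesis
    unfolding graph_dist_def by (intro INF_lower2[of p]) (auto simp: p_def)
qed

lemma char_imset_eq_iff:
  "char_imset n E S = char_imset n H S \<longleftrightarrow> (char_imset n E S = 1 \<longleftrightarrow> char_imset n H S = 1)"
  by (simp add: char_imset_def)

lemma char_imset_eq_1_iff:
  "char_imset n E S = 1 \<longleftrightarrow> S \<subseteq> {1..n} \<and> 2 \<le> card S \<and> (\<exists>l\<in>S. S \<subseteq> pa E l \<union> {l})"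
  by (simp add: char_imset_def)

lemma char_imset_eq_0_iff: "char_imset n E S = 0 \<longleftrightarrow> char_imset n E S \<noteq> 1"
  by (simp add: char_imset_def)

lemma char_imset_outside: "\<not> S \<subseteq> {1..n} \<Longrightarrow> char_imset n E S = 0"
  by (simp add: char_imset_def)

lemma char_imset_eqI:
  "(\<And>S. S \<subseteq> {1..n} \<Longrightarrow> char_imset n E S = char_imset n H S) \<Longrightarrow> char_imset n E = char_imset n H"
  by (metis char_imset_outside ext)

lemma finite_char_imsets: "finite {char_imset n E | E. is_DAG n E}"
proof -
  have "{E. is_DAG n E} \<subseteq> Pow ({1..n} \<times> {1..n})"
    by (auto simp: is_DAG_def)
  then have "finite (char_imset n ` {E. is_DAG n E})"
    by (meson finite_Pow_iff finite_SigmaI finite_atLeastAtMost finite_imageI finite_subset)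
  then show ?thesis
    by (simp add: setcompr_eq_image)
qed

lemma face_of_CIM_agreeing:
  assumes "finite J" "\<And>S. S \<in> J \<Longrightarrow> c S \<in> {0, 1}"
  shows "convex hull {x\<in>{char_imset n E | E. is_DAG n E}. \<forall>S\<in>J. x S = c S} face_of CIM n"
  unfolding CIM_def
  by (rule face_of_convex_hull_agreeing[OF finite_char_imsets assms]) (auto simp: char_imset_def)

lemma extreme_point_of_CIM:
  assumes "is_DAG n E"
  shows "char_imset n E extreme_point_of CIM n"
proof -
  have "{x\<in>{char_imset n H | H. is_DAG n H}. \<forall>S\<in>Pow {1..n}. x S = char_imset n E S} = {char_imset n E}"
    using assms char_imset_eqI by fastforce
  then show ?thesis
    using face_of_CIM_agreeing[of "Pow {1..n}" "char_imset n E" n]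
    by (simp add: char_imset_def face_of_singleton)
qed

lemma poly_vertices_CIM: "poly_vertices (CIM n) = {char_imset n E | E. is_DAG n E}"
  using extreme_points_of_convex_hull extreme_point_of_CIM
  by (fastforce simp: poly_vertices_def CIM_def)

lemma pa_subset_DAG: "is_DAG n E \<Longrightarrow> pa E i \<subseteq> {1..n}"
  by (auto simp: is_DAG_def pa_def)

lemma not_in_pa_DAG: "is_DAG n E \<Longrightarrow> i \<notin> pa E i"
  by (auto simp: is_DAG_def pa_def acyclic_def)

lemma pa_nonempty_if_covers:
  assumes "S \<subseteq> pa E l \<union> {l}" "2 \<le> card S"
  shows "pa E l \<noteq> {}"
proof
  assume "pa E l = {}"
  then have "card S \<le> card {l}"
    using assms(1) by (intro card_mono) auto
  then show False
    using assms(2) by simp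
qed

definition drop_in_edges :: "(nat \<times> nat) set \<Rightarrow> nat \<Rightarrow> (nat \<times> nat) set" where
  "drop_in_edges E i = {e\<in>E. snd e \<noteq> i}"

lemma pa_drop_in_edges: "pa (drop_in_edges E i) l = (if l = i then {} else pa E l)"
  by (auto simp: pa_def drop_in_edges_def)

lemma Range_drop_in_edges: "Range (drop_in_edges E i) = Range E - {i}"
  by (force simp: drop_in_edges_def)

lemma is_DAG_drop_in_edges: "is_DAG n E \<Longrightarrow> is_DAG n (drop_in_edges E i)"
  by (auto simp: is_DAG_def drop_in_edges_def intro: acyclic_subset)

definition family_sets :: "(nat \<times> nat) set \<Rightarrow> nat \<Rightarrow> nat set set" where
  "family_sets E i = {S. i \<in> S \<and> S \<subseteq> insert i (pa E i) \<and> 2 \<le> card S}"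

lemma family_in_family_sets:
  assumes "is_DAG n E" "pa E i \<noteq> {}"
  shows "insert i (pa E i) \<in> family_sets E i"
proof -
  have "finite (pa E i)"
    using pa_subset_DAG[OF assms(1)] finite_subset by blast
  then show ?thesis
    using assms not_in_pa_DAG[OF assms(1)]
    by (auto simp: family_sets_def Suc_le_eq card_gt_0_iff)
qed

lemma family_subset_DAG:
  assumes "is_DAG n E" "pa E i \<noteq> {}"
  shows "insert i (pa E i) \<subseteq> {1..n}"
  using assms by (auto simp: is_DAG_def pa_def)

lemma char_imset_family_sets:
  "S \<in> family_sets E i \<Longrightarrow> insert i (pa E i) \<subseteq> {1..n} \<Longrightarrow> char_imset n E S = 1"
  by (auto simp: char_imset_def family_sets_def)

lemma char_imset_drop_in_edges_family_sets:
  assumes "S \<in> family_sets E i" "\<forall>j\<in>pa E i. pa E j = {}"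
  shows "char_imset n (drop_in_edges E i) S = 0"
  unfolding char_imset_eq_0_iff
proof
  assume "char_imset n (drop_in_edges E i) S = 1"
  then obtain l where "l \<in> S" "S \<subseteq> pa (drop_in_edges E i) l \<union> {l}" "2 \<le> card S"
    unfolding char_imset_eq_1_iff by blast
  then have "pa (drop_in_edges E i) l \<noteq> {}"
    using pa_nonempty_if_covers by blast
  moreover have "l \<in> insert i (pa E i)"
    using \<open>l \<in> S\<close> assms(1) by (auto simp: family_sets_def)
  ultimately show False
    using assms(2) by (auto simp: pa_drop_in_edges split: if_splits)
qed

lemma char_imset_drop_in_edges_eq:
  assumes "S \<notin> family_sets E i"
  shows "char_imset n (drop_in_edges E i) S = char_imset n E S"
  unfolding char_imset_eq_iff
proof
  assume "char_imset n (drop_in_edges E i) S = 1"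
  then obtain l where l: "l \<in> S" "S \<subseteq> pa (drop_in_edges E i) l \<union> {l}"
    and S: "S \<subseteq> {1..n}" "2 \<le> card S"
    unfolding char_imset_eq_1_iff by blast
  have "l \<noteq> i"
    using pa_nonempty_if_covers[OF l(2) S(2)] by (auto simp: pa_drop_in_edges)
  then show "char_imset n E S = 1"
    using l S unfolding char_imset_eq_1_iff pa_drop_in_edges by auto
next
  assume "char_imset n E S = 1"
  then obtain l where l: "l \<in> S" "S \<subseteq> pa E l \<union> {l}" and S: "S \<subseteq> {1..n}" "2 \<le> card S"
    unfolding char_imset_eq_1_iff by blast
  have "l \<noteq> i"
    using assms l S by (auto simp: family_sets_def)
  then show "char_imset n (drop_in_edges E i) S = 1"
    using l S unfolding char_imset_eq_1_iff pa_drop_in_edges by auto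
qed

lemma char_imset_family_sets_forced:
  assumes E: "is_DAG n E" "pa E i \<noteq> {}" "\<forall>j\<in>pa E i. pa E j = {}"
    and agree: "\<And>S. S \<notin> family_sets E i \<Longrightarrow> char_imset n H S = char_imset n E S"
    and family: "char_imset n H (insert i (pa E i)) = 1"
    and S: "S \<in> family_sets E i"
  shows "char_imset n H S = 1"
proof -
  let ?T = "insert i (pa E i)"
  have T: "?T \<subseteq> {1..n}"
    using family_subset_DAG[OF E(1,2)] .
  from family obtain k where k: "k \<in> ?T" "?T \<subseteq> pa H k \<union> {k}"
    unfolding char_imset_eq_1_iff by blast
  show ?thesis
  proof (cases "k = i")
    case True
    then show ?thesis
      using S k T unfolding char_imset_eq_1_iff family_sets_def by auto
  next
    case False
    with k have "k \<in> pa E i" by simp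
    txt \<open>A second parent p of i would make the 1-coordinate {k, p} of H a coordinate outside the
      family sets on which E, whose parents of i are sources, is 0.\<close>
    have "pa E i = {k}"
    proof (rule ccontr)
      assume "pa E i \<noteq> {k}"
      then obtain p where p: "p \<in> pa E i" "p \<noteq> k"
        using \<open>k \<in> pa E i\<close> by blast
      have "{k, p} \<notin> family_sets E i"
        using p \<open>k \<in> pa E i\<close> not_in_pa_DAG[OF E(1)] by (auto simp: family_sets_def)
      moreover have "char_imset n H {k, p} = 1"
        using k p T unfolding char_imset_eq_1_iff by auto
      ultimately have "char_imset n E {k, p} = 1"
        using agree by simp
      then obtain l where "l \<in> {k, p}" "{k, p} \<subseteq> pa E l \<union> {l}" "2 \<le> card {k, p}"
        unfolding char_imset_eq_1_iff by blast
      then have "pa E l \<noteq> {}"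
        using pa_nonempty_if_covers by blast
      then show False
        using \<open>l \<in> {k, p}\<close> p \<open>k \<in> pa E i\<close> E(3) by auto
    qed
    then have "S \<subseteq> {i, k}" "card {i, k} \<le> card S"
      using S False by (auto simp: family_sets_def)
    then have "S = ?T"
      using \<open>pa E i = {k}\<close> by (simp add: card_seteq)
    then show ?thesis
      using family by simp
  qed
qed

definition family_gap :: "(nat \<times> nat) set \<Rightarrow> nat \<Rightarrow> (nat set \<Rightarrow> real) \<Rightarrow> real" where
  "family_gap E i x = (\<Sum>S\<in>family_sets E i. x (insert i (pa E i)) - x S)"

lemma linear_family_gap: "linear (family_gap E i)"
  unfolding family_gap_def
  by (intro linear_compose_sum ballI) (simp add: linearI scaleR_fun_def algebra_simps)

lemma finite_family_sets: "finite (pa E i) \<Longrightarrow> finite (family_sets E i)"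
  by (rule finite_subset[of _ "Pow (insert i (pa E i))"]) (auto simp: family_sets_def)

lemma family_gap_char_imset:
  assumes E: "is_DAG n E" "pa E i \<noteq> {}" "\<forall>j\<in>pa E i. pa E j = {}"
    and agree: "\<And>S. S \<notin> family_sets E i \<Longrightarrow> char_imset n H S = char_imset n E S"
  shows "family_gap E i (char_imset n H) \<le> 0"
    and "family_gap E i (char_imset n H) = 0 \<longleftrightarrow>
           char_imset n H = char_imset n E \<or> char_imset n H = char_imset n (drop_in_edges E i)"
proof -
  let ?T = "insert i (pa E i)" and ?F = "family_sets E i"
  let ?h = "char_imset n H" and ?c = "char_imset n E" and ?c' = "char_imset n (drop_in_edges E i)"
  have T: "?T \<in> ?F" "?T \<subseteq> {1..n}"
    using family_in_family_sets[OF E(1,2)] family_subset_DAG[OF E(1,2)] .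
  have "finite ?F"
    using finite_family_sets finite_subset[OF pa_subset_DAG[OF E(1)]] by blast
  have c_F: "?c S = 1" if "S \<in> ?F" for S
    using char_imset_family_sets[OF that T(2)] .
  have c'_F: "?c' S = 0" if "S \<in> ?F" for S
    using char_imset_drop_in_edges_family_sets[OF that E(3)] .
  have "family_gap E i ?h \<le> 0 \<and> (family_gap E i ?h = 0 \<longleftrightarrow> ?h = ?c \<or> ?h = ?c')"
  proof (cases "?h ?T = 1")
    case True
    then have h_F: "\<forall>S\<in>?F. ?h S = 1"
      using char_imset_family_sets_forced[OF E agree] by blast
    have "?h = ?c"
    proof
      show "?h S = ?c S" for S
        using agree c_F h_F by (cases "S \<in> ?F") auto
    qed
    moreover have "family_gap E i ?h = 0"
      unfolding family_gap_def using h_F True by (intro sum.neutral) auto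
    ultimately show ?thesis
      by simp
  next
    case False
    then have "?h ?T = 0"
      by (simp add: char_imset_eq_0_iff)
    then have gap: "family_gap E i ?h = - (\<Sum>S\<in>?F. ?h S)"
      by (simp add: family_gap_def sum_negf)
    have h_nonneg: "0 \<le> ?h S" for S
      by (simp add: char_imset_def)
    have "(\<Sum>S\<in>?F. ?h S) = 0 \<longleftrightarrow> (\<forall>S\<in>?F. ?h S = 0)"
      using sum_nonneg_eq_0_iff[OF \<open>finite ?F\<close>] h_nonneg by blast
    also have "\<dots> \<longleftrightarrow> ?h = ?c'"
    proof
      assume h_F: "\<forall>S\<in>?F. ?h S = 0"
      show "?h = ?c'"
      proof
        show "?h S = ?c' S" for S
          using agree c'_F h_F char_imset_drop_in_edges_eq by (cases "S \<in> ?F") auto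
      qed
    qed (use c'_F in auto)
    finally have "family_gap E i ?h = 0 \<longleftrightarrow> ?h = ?c'"
      using gap by simp
    moreover have "?h \<noteq> ?c"
      using False c_F T(1) by metis
    moreover have "0 \<le> (\<Sum>S\<in>?F. ?h S)"
      using h_nonneg by (simp add: sum_nonneg)
    ultimately show ?thesis
      using gap by auto
  qed
  then show "family_gap E i ?h \<le> 0" and "family_gap E i ?h = 0 \<longleftrightarrow> ?h = ?c \<or> ?h = ?c'"
    by auto
qed

lemma poly_adj_CIM_drop_in_edges:
  assumes E: "is_DAG n E" "pa E i \<noteq> {}" "\<forall>j\<in>pa E i. pa E j = {}"
  shows "poly_adj (CIM n) (char_imset n E) (char_imset n (drop_in_edges E i))"
proof -
  let ?c = "char_imset n E" and ?c' = "char_imset n (drop_in_edges E i)"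
  let ?T = "insert i (pa E i)" and ?F = "family_sets E i"
  define Y where "Y = {x\<in>{char_imset n H | H. is_DAG n H}. \<forall>S\<in>Pow {1..n} - ?F. x S = ?c S}"
  have "convex hull Y face_of CIM n"
    unfolding Y_def by (rule face_of_CIM_agreeing) (auto simp: char_imset_def)
  have "finite Y"
    using finite_char_imsets by (simp add: Y_def)
  have Y_agree: "\<exists>H. x = char_imset n H \<and> (\<forall>S. S \<notin> ?F \<longrightarrow> char_imset n H S = ?c S)"
    if "x \<in> Y" for x
  proof -
    from that obtain H where "x = char_imset n H" "\<forall>S\<in>Pow {1..n} - ?F. x S = ?c S"
      unfolding Y_def by blast
    moreover have "char_imset n H S = ?c S" if "S \<notin> ?F" "\<not> S \<subseteq> {1..n}" for S
      using that(2) by (simp add: char_imset_outside)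
    ultimately show ?thesis
      by blast
  qed
  have "?c \<in> Y" "?c' \<in> Y"
    using E(1) is_DAG_drop_in_edges[OF E(1)] char_imset_drop_in_edges_eq by (auto simp: Y_def)
  have gap_le: "family_gap E i x \<le> 0" if "x \<in> Y" for x
    using Y_agree[OF that] family_gap_char_imset(1)[OF E] by blast
  have "{x\<in>Y. family_gap E i x = 0} = {?c, ?c'}"
  proof
    show "{x\<in>Y. family_gap E i x = 0} \<subseteq> {?c, ?c'}"
      using Y_agree family_gap_char_imset(2)[OF E] by blast
    have "family_gap E i ?c = 0" "family_gap E i ?c' = 0"
      using family_gap_char_imset(2)[OF E] char_imset_drop_in_edges_eq by auto
    then show "{?c, ?c'} \<subseteq> {x\<in>Y. family_gap E i x = 0}"
      using \<open>?c \<in> Y\<close> \<open>?c' \<in> Y\<close> by blast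
  qed
  then have "convex hull {?c, ?c'} face_of convex hull Y"
    using face_of_convex_hull_maximizers[OF linear_family_gap \<open>finite Y\<close> gap_le] by simp
  then have "convex hull {?c, ?c'} face_of CIM n"
    using \<open>convex hull Y face_of CIM n\<close> by (rule face_of_trans)
  moreover have "?c ?T = 1" "?c' ?T = 0"
    using char_imset_family_sets[OF family_in_family_sets[OF E(1,2)] family_subset_DAG[OF E(1,2)]]
      char_imset_drop_in_edges_family_sets[OF family_in_family_sets[OF E(1,2)] E(3)] .
  then have "?c \<noteq> ?c'"
    by (metis zero_neq_one)
  moreover have "?c \<in> poly_vertices (CIM n)" "?c' \<in> poly_vertices (CIM n)"
    using E(1) is_DAG_drop_in_edges[OF E(1)] by (auto simp: poly_vertices_CIM)
  ultimately show ?thesis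
    unfolding poly_adj_def by blast
qed

lemma poly_adj_sym: "poly_adj P u v \<Longrightarrow> poly_adj P v u"
  by (auto simp: poly_adj_def insert_commute)

lemma finite_DAG: "is_DAG n E \<Longrightarrow> finite E"
  unfolding is_DAG_def using finite_subset by blast

lemma acyclic_obtains_node_with_source_parents:
  assumes "finite E" "acyclic E" "E \<noteq> {}"
  obtains i where "pa E i \<noteq> {}" "\<forall>j\<in>pa E i. pa E j = {}"
proof -
  from \<open>E \<noteq> {}\<close> obtain a where "a \<in> Range E"
    by auto
  with wfE_min[OF finite_acyclic_wf[OF assms(1,2)]]
  obtain i where "i \<in> Range E" "\<And>j. (j, i) \<in> E \<Longrightarrow> j \<notin> Range E"
    by metis
  then show thesis
    by (intro that) (auto simp: pa_def)
qed

lemma relpowp_poly_adj_CIM_empty: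
  assumes "is_DAG n E"
  shows "(poly_adj (CIM n) ^^ card (Range E)) (char_imset n E) (char_imset n {})"
  using assms
proof (induction "card (Range E)" arbitrary: E)
  case 0
  have "finite (Range E)"
    using finite_DAG[OF 0(2)] by (rule finite_Range)
  then have "E = {}"
    using 0(1) by auto
  then show ?case
    by simp
next
  case (Suc k)
  then have "finite E" "acyclic E" "E \<noteq> {}"
    using finite_DAG by (auto simp: is_DAG_def)
  then obtain i where i: "pa E i \<noteq> {}" "\<forall>j\<in>pa E i. pa E j = {}"
    by (rule acyclic_obtains_node_with_source_parents)
  then have "i \<in> Range E"
    by (auto simp: pa_def)
  then have "card (Range (drop_in_edges E i)) = k"
    using Suc.hyps(2) \<open>finite E\<close> by (simp add: Range_drop_in_edges card_Diff_singleton)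
  then have "(poly_adj (CIM n) ^^ k) (char_imset n (drop_in_edges E i)) (char_imset n {})"
    using Suc.hyps(1)[OF _ is_DAG_drop_in_edges[OF Suc.prems]] by metis
  then show ?case
    unfolding Suc.hyps(2)[symmetric]
    by (rule relpowp_Suc_I2[where P = "poly_adj (CIM n)", OF poly_adj_CIM_drop_in_edges[OF Suc.prems i]])
qed

lemma card_Range_DAG:
  assumes "is_DAG n E"
  shows "card (Range E) \<le> n - 1"
proof (cases "n = 0")
  case True
  then show ?thesis
    using assms by (auto simp: is_DAG_def)
next
  case False
  have E: "E \<subseteq> {1..n} \<times> {1..n}" "acyclic E"
    using assms by (auto simp: is_DAG_def)
  from False have "1 \<in> {1..n}"
    by simp
  with wfE_min[OF finite_acyclic_wf[OF finite_DAG[OF assms] E(2)]]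
  obtain z where "z \<in> {1..n}" "\<And>y. (y, z) \<in> E \<Longrightarrow> y \<notin> {1..n}"
    by metis
  then have "Range E \<subseteq> {1..n} - {z}"
    using E(1) by blast
  then have "card (Range E) \<le> card ({1..n} - {z})"
    by (intro card_mono) auto
  also have "\<dots> = n - 1"
    using \<open>z \<in> {1..n}\<close> by simp
  finally show ?thesis .
qed

theorem mainTheorem7:
  fixes n :: nat
  assumes "n \<ge> 1"
  shows "poly_diam (CIM n) \<le> enat (2 * n - 2)"
  unfolding poly_diam_def
proof (intro SUP_least)
  fix u v
  assume "u \<in> poly_vertices (CIM n)" "v \<in> poly_vertices (CIM n)"
  then obtain E H where E: "is_DAG n E" "u = char_imset n E" and H: "is_DAG n H" "v = char_imset n H"
    by (auto simp: poly_vertices_CIM)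
  let ?adj = "poly_adj (CIM n)"
  have "(?adj ^^ card (Range E)) u (char_imset n {})"
    using relpowp_poly_adj_CIM_empty[OF E(1)] E(2) by simp
  moreover have "(?adj ^^ card (Range H)) (char_imset n {}) v"
    using relpowp_sym[OF poly_adj_sym relpowp_poly_adj_CIM_empty[OF H(1)]] H(2) by simp
  ultimately have "graph_dist ?adj u v \<le> enat (card (Range E) + card (Range H))"
    by (intro graph_dist_le_relpowp relpowp_trans)
  also have "\<dots> \<le> enat (2 * n - 2)"
    using card_Range_DAG[OF E(1)] card_Range_DAG[OF H(1)] by simp
  finally show "graph_dist ?adj u v \<le> enat (2 * n - 2)" .
qed

end
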